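(* Let $\vec{\mathcal{G}}$ be a game graph with Min vertices $[n]$ satisfying assumptions (a)–(c), and assume moreover that every Random vertex has exactly two outgoing edges, each with probability $1/2$, and that every edge outgoing from a Random vertex has a Max vertex as its head. Let $F$ be the operator encoded by $\vec{\mathcal{G}}$, extended to $\mathbb{T}^n$ by the same formula (with $-\infty+a=-\infty$, $\tfrac12\cdot(-\infty)=-\infty$, and only terms with $p^e_w>0$, $p^{e'}_u>0$ kept in the sums). Then $\{x\in\mathbb{T}^n: x\le F(x)\}$ is a tropical Metzler spectrahedral cone, i.e. equals $\mathcal{S}(-\infty\,|\,Q^{(1)},\dots,Q^{(n)})$ for some symmetric tropical Metzler matrices $Q^{(1)},\dots,Q^{(n)}$ (with $Q^{(0)}$ the matrix all of whose entries are $(0,-\infty)$).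
   Context: Game graph: directed graph $(V,E)$, $V=V_{\mathrm{Min}}\uplus V_{\mathrm{Rand}}\uplus V_{\mathrm{Max}}$, $V_{\mathrm{Min}}=[n]$, $V_{\mathrm{Max}}=[m]$ nonempty, each vertex with an outgoing edge; $\mathrm{Out}(v)$ = outgoing edges. Edges with Min/Max tail carry reals $r_e$; edges with Random tail carry rationals $q_e>0$ summing to $1$ at each Random vertex. Assumptions: (a) every path between two Min vertices contains a Max vertex; (b) every path between two Max vertices contains a Min vertex; (c) every Random vertex has a path to a Min or Max vertex. With the Markov chain where Min/Max vertices are absorbing and Random $v$ moves to $w$ with probability $q_{(v,w)}$, $p^e_v$ is the probability of absorption at $v$ starting from the head of $e$. Encoded operator: $F_v(x)=\min_{e\in\mathrm{Out}(v)}\big(r_e+\sum_{w\in[m]}p^e_w\max_{e'\in\mathrm{Out}(w)}(r_{e'}+\sum_{u\in[n]}p^{e'}_u x_u)\big)$. $\mathbb{T}=\mathbb{R}\cup\{-\infty\}$. Signed tropical numbers $\mathbb{S}=(\{\pm1\}\times\mathbb{R})\cup\{(0,-\infty)\}$; $(1,a)$ positive, $(-1,a)$ negative, modulus $|(s,a)|=a$. A matrix over $\mathbb{S}$ is tropical Metzler if its off-diagonal entries are negative or $(0,-\infty)$. For symmetric tropical Metzler $Q^{(0)},\dots,Q^{(N)}\in\mathbb{S}^{m'\times m'}$, with $x_0:=0$ and $x\in\mathbb{T}^N$: $Q^{\pm}_{ii}(x)=\max\{|Q^{(k)}_{ii}|+x_k: Q^{(k)}_{ii}\text{ positive (resp.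 negative)}\}$ ($\max\emptyset=-\infty$), $Q_{ij}(x)=\max_k(|Q^{(k)}_{ij}|+x_k)$ for $i\ne j$; $\mathcal{S}(Q^{(0)}|Q^{(1)},\dots,Q^{(N)})=\{x\in\mathbb{T}^N: Q^+_{ii}(x)\ge Q^-_{ii}(x)\ \forall i,\ Q^+_{ii}(x)+Q^+_{jj}(x)\ge2Q_{ij}(x)\ \forall i\ne j\}$. *)

theory Defs
  imports "HOL-Analysis.Analysis" "HOL-Library.Extended_Real"
begin

text \<open>Vertices: Min vertices indexed by the finite type 'n (so [n] = 'n),
  Max vertices indexed by the finite type 'm (so [m] = 'm), Random vertices
  indexed by elements of a finite set R :: 'r set.\<close>

datatype ('n, 'm, 'r) vertex = MinV 'n | MaxV 'm | RandV 'r

fun isMin :: "('n, 'm, 'r) vertex \<Rightarrow> bool" where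
  "isMin (MinV _) = True" | "isMin _ = False"
fun isMax :: "('n, 'm, 'r) vertex \<Rightarrow> bool" where
  "isMax (MaxV _) = True" | "isMax _ = False"
fun isRand :: "('n, 'm, 'r) vertex \<Rightarrow> bool" where
  "isRand (RandV _) = True" | "isRand _ = False"

type_synonym ('n, 'm, 'r) edge = "('n, 'm, 'r) vertex \<times> ('n, 'm, 'r) vertex"

definition verts :: "'r set \<Rightarrow> ('n, 'm, 'r) vertex set" where
  "verts R = range MinV \<union> range MaxV \<union> RandV ` R"

definition Out :: "('n, 'm, 'r) edge set \<Rightarrow> ('n, 'm, 'r) vertex \<Rightarrow> ('n, 'm, 'r) edge set" where
  "Out E v = {e \<in> E. fst e = v}"

definition is_path :: "('n, 'm, 'r) edge set \<Rightarrow> ('n, 'm, 'r) vertex list \<Rightarrow> bool" where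
  "is_path E xs \<longleftrightarrow> length xs \<ge> 2 \<and> (\<forall>i. Suc i < length xs \<longrightarrow> (xs ! i, xs ! Suc i) \<in> E)"

definition game_graph ::
  "'r set \<Rightarrow> ('n::finite, 'm::finite, 'r) edge set \<Rightarrow> (('n, 'm, 'r) edge \<Rightarrow> real) \<Rightarrow> bool" where
  "game_graph R E q \<longleftrightarrow>
     finite R \<and> E \<subseteq> verts R \<times> verts R \<and>
     (\<forall>v \<in> verts R. Out E v \<noteq> {}) \<and>
     (\<forall>e \<in> E. isRand (fst e) \<longrightarrow> q e \<in> \<rat> \<and> q e > 0) \<and>
     (\<forall>k \<in> R. (\<Sum>e \<in> Out E (RandV k). q e) = 1) \<and>
     \<comment> \<open>(a)\<close>
     (\<forall>xs. is_path E xs \<and> isMin (hd xs) \<and> isMin (last xs) \<longrightarrow> (\<exists>v \<in> set xs. isMax v)) \<and>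
     \<comment> \<open>(b)\<close>
     (\<forall>xs. is_path E xs \<and> isMax (hd xs) \<and> isMax (last xs) \<longrightarrow> (\<exists>v \<in> set xs. isMin v)) \<and>
     \<comment> \<open>(c)\<close>
     (\<forall>k \<in> R. \<exists>xs. is_path E xs \<and> hd xs = RandV k \<and> \<not> isRand (last xs))"

fun absorb_k :: "('n, 'm, 'r) edge set \<Rightarrow> (('n, 'm, 'r) edge \<Rightarrow> real) \<Rightarrow> nat
     \<Rightarrow> ('n, 'm, 'r) vertex \<Rightarrow> ('n, 'm, 'r) vertex \<Rightarrow> real" where
  "absorb_k E q 0 v w = (if isRand v then 0 else if v = w then 1 else 0)"
| "absorb_k E q (Suc k) v w =
     (if isRand v then (\<Sum>e \<in> Out E v. q e * absorb_k E q k (snd e) w)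
      else if v = w then 1 else 0)"

definition absorb_prob :: "('n, 'm, 'r) edge set \<Rightarrow> (('n, 'm, 'r) edge \<Rightarrow> real)
     \<Rightarrow> ('n, 'm, 'r) vertex \<Rightarrow> ('n, 'm, 'r) vertex \<Rightarrow> real" where
  "absorb_prob E q v w = lim (\<lambda>k. absorb_k E q k v w)"

definition pe :: "('n, 'm, 'r) edge set \<Rightarrow> (('n, 'm, 'r) edge \<Rightarrow> real)
     \<Rightarrow> ('n, 'm, 'r) edge \<Rightarrow> ('n, 'm, 'r) vertex \<Rightarrow> real" where
  "pe E q e w = absorb_prob E q (snd e) w"

definition max_part :: "('n::finite, 'm::finite, 'r) edge set \<Rightarrow> (('n, 'm, 'r) edge \<Rightarrow> real)
     \<Rightarrow> (('n, 'm, 'r) edge \<Rightarrow> real) \<Rightarrow> ('n \<Rightarrow> ereal) \<Rightarrow> 'm \<Rightarrow> ereal" where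
  "max_part E r q x w =
     Max ((\<lambda>e'. ereal (r e') +
                (\<Sum>u \<in> {u. pe E q e' (MinV u) > 0}. ereal (pe E q e' (MinV u)) * x u))
          ` Out E (MaxV w))"

definition game_op :: "('n::finite, 'm::finite, 'r) edge set \<Rightarrow> (('n, 'm, 'r) edge \<Rightarrow> real)
     \<Rightarrow> (('n, 'm, 'r) edge \<Rightarrow> real) \<Rightarrow> ('n \<Rightarrow> ereal) \<Rightarrow> 'n \<Rightarrow> ereal" where
  "game_op E r q x v =
     Min ((\<lambda>e. ereal (r e) +
               (\<Sum>w \<in> {w. pe E q e (MaxV w) > 0}. ereal (pe E q e (MaxV w)) * max_part E r q x w))
          ` Out E (MinV v))"

text \<open>Pos a = (1,a), Neg a = (-1,a), SZero = (0,-\<infinity>).\<close>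
datatype stnum = Pos real | Neg real | SZero

fun smod :: "stnum \<Rightarrow> ereal" where
  "smod (Pos a) = ereal a" | "smod (Neg a) = ereal a" | "smod SZero = -\<infinity>"

fun is_pos :: "stnum \<Rightarrow> bool" where
  "is_pos (Pos _) = True" | "is_pos _ = False"
fun is_neg :: "stnum \<Rightarrow> bool" where
  "is_neg (Neg _) = True" | "is_neg _ = False"

type_synonym smatrix = "nat \<Rightarrow> nat \<Rightarrow> stnum"

text \<open>Matrices of size d x d, indices 0..<d.\<close>
definition sym_mat :: "nat \<Rightarrow> smatrix \<Rightarrow> bool" where
  "sym_mat d Q \<longleftrightarrow> (\<forall>i<d. \<forall>j<d. Q i j = Q j i)"

definition trop_metzler :: "nat \<Rightarrow> smatrix \<Rightarrow> bool" where
  "trop_metzler d Q \<longleftrightarrow> (\<forall>i<d. \<forall>j<d. i \<noteq> j \<longrightarrow> is_neg (Q i j) \<or> Q i j = SZero)"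

definition Qplus :: "smatrix \<Rightarrow> ('k \<Rightarrow> smatrix) \<Rightarrow> ('k \<Rightarrow> ereal) \<Rightarrow> nat \<Rightarrow> ereal" where
  "Qplus Q0 Qs x i = Sup ({smod (Q0 i i) + 0 | _::unit. is_pos (Q0 i i)}
                          \<union> {smod (Qs k i i) + x k | k. is_pos (Qs k i i)})"

definition Qminus :: "smatrix \<Rightarrow> ('k \<Rightarrow> smatrix) \<Rightarrow> ('k \<Rightarrow> ereal) \<Rightarrow> nat \<Rightarrow> ereal" where
  "Qminus Q0 Qs x i = Sup ({smod (Q0 i i) + 0 | _::unit. is_neg (Q0 i i)}
                           \<union> {smod (Qs k i i) + x k | k. is_neg (Qs k i i)})"

definition Qoff :: "smatrix \<Rightarrow> ('k \<Rightarrow> smatrix) \<Rightarrow> ('k \<Rightarrow> ereal) \<Rightarrow> nat \<Rightarrow> nat \<Rightarrow> ereal" where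
  "Qoff Q0 Qs x i j = Sup ({smod (Q0 i j) + 0} \<union> range (\<lambda>k. smod (Qs k i j) + x k))"

text \<open>S(Q0 | Q1..QN), with the Q^(k), k \<ge> 1, indexed by the finite type 'k.\<close>
definition trop_spectrahedron :: "nat \<Rightarrow> smatrix \<Rightarrow> ('k::finite \<Rightarrow> smatrix) \<Rightarrow> ('k \<Rightarrow> ereal) set" where
  "trop_spectrahedron d Q0 Qs =
     {x. (\<forall>k. x k \<noteq> \<infinity>) \<and>
         (\<forall>i<d. Qplus Q0 Qs x i \<ge> Qminus Q0 Qs x i) \<and>
         (\<forall>i<d. \<forall>j<d. i \<noteq> j \<longrightarrow> Qplus Q0 Qs x i + Qplus Q0 Qs x j \<ge> 2 * Qoff Q0 Qs x i j)}"

end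

theory Submission
  imports Defs
begin

text \<open>Max vertices move only to Min vertices and every Random vertex splits evenly between two
  Max vertices, so the term of \<open>F v x\<close> belonging to a Min edge \<open>e\<close> is
  \<open>r e + S a x / 2 + S b x / 2\<close>, where \<open>S a x = max\<^sub>u (r (a, u) + x u)\<close> is the tropical linear
  form of a Max vertex \<open>a\<close> (and \<open>a = b\<close> when \<open>e\<close> leads directly to a Max vertex).
  The constraint \<open>2 (x v - r e) \<le> S a x + S b x\<close> is the tropical \<open>2\<times>2\<close> minor condition of a
  symmetric block with diagonal \<open>S a x, S b x\<close> and off-diagonal entry \<open>x v - r e\<close>; one such
  block per Min edge yields a Metzler spectrahedron.\<close>

definition trop_form :: "('m \<Rightarrow> 'k \<Rightarrow> bool) \<Rightarrow> ('m \<Rightarrow> 'k \<Rightarrow> real) \<Rightarrow> ('k \<Rightarrow> ereal) \<Rightarrow> 'm \<Rightarrow> ereal" where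
  "trop_form P w x a = Sup {ereal (w a k) + x k | k. P a k}"

lemma trop_form_not_infty:
  fixes x :: "'k::finite \<Rightarrow> ereal"
  assumes "\<forall>k. x k \<noteq> \<infinity>"
  shows "trop_form P w x a \<noteq> \<infinity>"
proof (cases "\<exists>k. P a k")
  case True
  have "finite {ereal (w a k) + x k | k. P a k}" by simp
  with True have "trop_form P w x a \<in> {ereal (w a k) + x k | k. P a k}"
    unfolding trop_form_def using cSup_eq_Max Max_in by (metis (mono_tags, lifting) empty_Collect_eq)
  then show ?thesis using assms by auto
qed (simp add: trop_form_def bot_ereal_def)

definition block_label :: "(nat \<Rightarrow> 'm) \<Rightarrow> (nat \<Rightarrow> 'm) \<Rightarrow> nat \<Rightarrow> 'm" where
  "block_label A B i = (if even i then A (i div 2) else B (i div 2))"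

text \<open>Block \<open>t\<close> occupies rows \<open>2t\<close> and \<open>2t+1\<close>; its diagonal encodes the forms of \<open>A t\<close> and \<open>B t\<close>,
  its off-diagonal entry is \<open>c t + x (V t)\<close>.\<close>

definition block_matrix :: "(nat \<Rightarrow> 'm) \<Rightarrow> (nat \<Rightarrow> 'm) \<Rightarrow> (nat \<Rightarrow> 'k) \<Rightarrow> (nat \<Rightarrow> real)
    \<Rightarrow> ('m \<Rightarrow> 'k \<Rightarrow> bool) \<Rightarrow> ('m \<Rightarrow> 'k \<Rightarrow> real) \<Rightarrow> 'k \<Rightarrow> smatrix" where
  "block_matrix A B V c P w u i j =
     (if i = j then (if P (block_label A B i) u then Pos (w (block_label A B i) u) else SZero)
      else if i div 2 = j div 2 \<and> u = V (i div 2) then Neg (c (i div 2)) else SZero)"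

lemma block_matrix_sym_metzler:
  "sym_mat d (block_matrix A B V c P w u) \<and> trop_metzler d (block_matrix A B V c P w u)"
  unfolding sym_mat_def trop_metzler_def block_matrix_def by auto

lemma Qplus_block_matrix:
  "Qplus (\<lambda>_ _. SZero) (block_matrix A B V c P w) x i = trop_form P w x (block_label A B i)"
  unfolding Qplus_def trop_form_def by (rule arg_cong[where f=Sup]) (auto simp: block_matrix_def)

lemma Qminus_block_matrix: "Qminus (\<lambda>_ _. SZero) (block_matrix A B V c P w) x i = -\<infinity>"
  unfolding Qminus_def by (simp add: block_matrix_def bot_ereal_def)

lemma Qoff_block_matrix:
  assumes "\<forall>k. x k \<noteq> \<infinity>" and "i \<noteq> j"
  shows "Qoff (\<lambda>_ _. SZero) (block_matrix A B V c P w) x i j =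
     (if i div 2 = j div 2 then ereal (c (i div 2)) + x (V (i div 2)) else -\<infinity>)"
proof -
  have entry: "smod (block_matrix A B V c P w k i j) + x k =
      (if i div 2 = j div 2 \<and> k = V (i div 2) then ereal (c (i div 2)) + x k else -\<infinity>)" for k
    using assms by (cases "x k") (auto simp: block_matrix_def)
  show ?thesis unfolding Qoff_def entry
    by (rule antisym) (auto intro!: Sup_least Sup_upper2[where u="ereal (c (i div 2)) + x (V (i div 2))"])
qed

lemma trop_spectrahedron_block_matrix_iff:
  fixes x :: "'k::finite \<Rightarrow> ereal"
  shows "x \<in> trop_spectrahedron (2 * N) (\<lambda>_ _. SZero) (block_matrix A B V c P w) \<longleftrightarrow>
    (\<forall>k. x k \<noteq> \<infinity>) \<and>
    (\<forall>t<N. 2 * (ereal (c t) + x (V t)) \<le> trop_form P w x (A t) + trop_form P w x (B t))"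
proof (cases "\<forall>k. x k \<noteq> \<infinity>")
  case True
  let ?S = "trop_form P w x" and ?l = "block_label A B"
  have "x \<in> trop_spectrahedron (2 * N) (\<lambda>_ _. SZero) (block_matrix A B V c P w) \<longleftrightarrow>
      (\<forall>i<2*N. \<forall>j<2*N. i \<noteq> j \<longrightarrow>
         2 * (if i div 2 = j div 2 then ereal (c (i div 2)) + x (V (i div 2)) else -\<infinity>) \<le> ?S (?l i) + ?S (?l j))"
    using True by (auto simp: trop_spectrahedron_def Qplus_block_matrix Qminus_block_matrix Qoff_block_matrix)
  also have "\<dots> \<longleftrightarrow> (\<forall>t<N. 2 * (ereal (c t) + x (V t)) \<le> ?S (A t) + ?S (B t))"
  proof safe
    fix t assume H: "\<forall>i<2*N. \<forall>j<2*N. i \<noteq> j \<longrightarrow>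
         2 * (if i div 2 = j div 2 then ereal (c (i div 2)) + x (V (i div 2)) else -\<infinity>) \<le> ?S (?l i) + ?S (?l j)"
      and "t < N"
    then have "2*t < 2*N" "2*t+1 < 2*N" by simp_all
    from H[rule_format, OF this] show "2 * (ereal (c t) + x (V t)) \<le> ?S (A t) + ?S (B t)"
      by (simp add: block_label_def)
  next
    fix i j assume H: "\<forall>t<N. 2 * (ereal (c t) + x (V t)) \<le> ?S (A t) + ?S (B t)"
      and "i < 2*N" "j < 2*N" "i \<noteq> j"
    show "2 * (if i div 2 = j div 2 then ereal (c (i div 2)) + x (V (i div 2)) else -\<infinity>) \<le> ?S (?l i) + ?S (?l j)"
    proof (cases "i div 2 = j div 2")
      case True
      then have "(even i \<and> odd j) \<or> (odd i \<and> even j)" using \<open>i \<noteq> j\<close> by presburger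
      moreover have "i div 2 < N" using \<open>i < 2*N\<close> by simp
      ultimately show ?thesis using H True by (auto simp: block_label_def add.commute)
    qed simp
  qed
  finally show ?thesis using True by simp
qed (auto simp: trop_spectrahedron_def)

lemma absorb_prob_nonrand: "\<not> isRand v \<Longrightarrow> absorb_prob E q v w = (if v = w then 1 else 0)"
proof -
  assume "\<not> isRand v"
  then have "absorb_k E q k v w = (if v = w then 1 else 0)" for k
    by (cases k) auto
  then show ?thesis unfolding absorb_prob_def by (simp add: limI)
qed

lemma absorb_prob_one_step:
  assumes "isRand v" and "\<forall>e \<in> Out E v. \<not> isRand (snd e)"
  shows "absorb_prob E q v w = (\<Sum>e \<in> Out E v. q e * (if snd e = w then 1 else 0))"
proof -
  have "absorb_k E q (Suc k) v w = (\<Sum>e \<in> Out E v. q e * (if snd e = w then 1 else 0))" for k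
  proof -
    have "absorb_k E q k (snd e) w = (if snd e = w then 1 else 0)" if "e \<in> Out E v" for e
      using assms(2) that by (cases k) auto
    then show ?thesis using assms(1) by (auto intro: sum.cong)
  qed
  then have "(\<lambda>k. absorb_k E q (Suc k) v w) \<longlonglongrightarrow> (\<Sum>e \<in> Out E v. q e * (if snd e = w then 1 else 0))"
    by simp
  then show ?thesis unfolding absorb_prob_def by (rule limI[OF LIMSEQ_imp_Suc])
qed

lemma sum_half_indicators:
  fixes M :: "'a \<Rightarrow> ereal"
  assumes "\<forall>w. p w = (if w = a then 1/2 else 0) + (if w = b then 1/2 else 0)"
  shows "(\<Sum>w \<in> {w. p w > 0}. ereal (p w) * M w) = ereal (1/2) * M a + ereal (1/2) * M b"
proof (cases "a = b")
  case True
  then have "{w. p w > 0} = {a}" and "p a = 1" using assms by auto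
  then show ?thesis using True by (cases "M a") auto
next
  case False
  have "{w. p w > 0} = {a, b}" using False assms by auto
  then have "(\<Sum>w \<in> {w. p w > 0}. ereal (p w) * M w) = ereal (p a) * M a + ereal (p b) * M b"
    using False by simp
  also have "\<dots> = ereal (1/2) * M a + ereal (1/2) * M b" using False assms by simp
  finally show ?thesis .
qed

lemma le_plus_half_sum_iff:
  fixes X Y Z :: ereal
  assumes "X \<noteq> \<infinity>" "Y \<noteq> \<infinity>" "Z \<noteq> \<infinity>"
  shows "X \<le> ereal c + (ereal (1/2) * Y + ereal (1/2) * Z) \<longleftrightarrow> 2 * (ereal (-c) + X) \<le> Y + Z"
  using assms by (cases X; cases Y; cases Z) (auto simp: field_simps)

locale binary_random_game =
  fixes R :: "'r set" and E :: "('n::finite, 'm::finite, 'r) edge set" and q :: "('n, 'm, 'r) edge \<Rightarrow> real"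
  assumes game_graph: "game_graph R E q"
    and rand_out_card: "\<forall>k \<in> R. card (Out E (RandV k)) = 2"
    and rand_out_half_max: "\<forall>k \<in> R. \<forall>e \<in> Out E (RandV k). q e = 1/2 \<and> isMax (snd e)"
begin

lemma finite_E: "finite E"
proof -
  have "finite (verts R :: ('n, 'm, 'r) vertex set)"
    using game_graph unfolding game_graph_def verts_def by auto
  then show ?thesis using game_graph unfolding game_graph_def by (meson finite_SigmaI rev_finite_subset)
qed

lemma finite_Out: "finite (Out E v)"
  using finite_E unfolding Out_def by auto

lemma Out_nonempty: "v \<in> verts R \<Longrightarrow> Out E v \<noteq> {}"
  using game_graph unfolding game_graph_def by auto

lemma edge_in_verts: "(a, b) \<in> E \<Longrightarrow> a \<in> verts R \<and> b \<in> verts R"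
  using game_graph unfolding game_graph_def by auto

lemma two_step_path: "(a, b) \<in> E \<Longrightarrow> is_path E [a, b]"
  unfolding is_path_def by (auto simp: less_Suc_eq)

lemma three_step_path: "(a, b) \<in> E \<Longrightarrow> (b, c) \<in> E \<Longrightarrow> is_path E [a, b, c]"
  unfolding is_path_def by (auto simp: less_Suc_eq nth_Cons split: nat.splits)

lemma rand_edge: "(RandV k, h) \<in> E \<Longrightarrow> k \<in> R \<and> q (RandV k, h) = 1/2 \<and> (\<exists>w. h = MaxV w)"
proof -
  assume e: "(RandV k, h) \<in> E"
  then have k: "k \<in> R" using edge_in_verts unfolding verts_def by blast
  moreover have "(RandV k, h) \<in> Out E (RandV k)" using e unfolding Out_def by simp
  ultimately show ?thesis using rand_out_half_max by (cases h) fastforce+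
qed

lemma min_edge_head: "(MinV v, h) \<in> E \<Longrightarrow> \<not> isMin h"
proof
  assume e: "(MinV v, h) \<in> E" and "isMin h"
  then have "\<exists>u \<in> set [MinV v, h]. isMax u"
    using game_graph two_step_path[OF e] unfolding game_graph_def by fastforce
  then show False using \<open>isMin h\<close> by (cases h) auto
qed

lemma max_edge_head: "(MaxV w, h) \<in> E \<Longrightarrow> \<exists>u. h = MinV u"
proof -
  assume e: "(MaxV w, h) \<in> E"
  have path_B: "\<exists>v \<in> set xs. isMin v" if "is_path E xs" "isMax (hd xs)" "isMax (last xs)" for xs
    using game_graph that unfolding game_graph_def by blast
  show ?thesis
  proof (cases h)
    case (MaxV w')
    then show ?thesis using path_B[OF two_step_path[OF e]] by auto
  next
    case (RandV k)
    obtain h' where e': "(RandV k, h') \<in> E"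
      using Out_nonempty edge_in_verts[OF e] RandV unfolding Out_def by fastforce
    then obtain w' where "h' = MaxV w'" using rand_edge by blast
    moreover have "is_path E [MaxV w, h, h']" using three_step_path e e' RandV by simp
    ultimately show ?thesis using path_B RandV by fastforce
  qed auto
qed

lemma rand_out_two_max:
  assumes "k \<in> R"
  obtains w1 w2 where "w1 \<noteq> w2" "Out E (RandV k) = {(RandV k, MaxV w1), (RandV k, MaxV w2)}"
proof -
  obtain e1 e2 where out: "Out E (RandV k) = {e1, e2}" "e1 \<noteq> e2"
    using rand_out_card assms card_2_iff by metis
  then have "e1 \<in> E" "fst e1 = RandV k" "e2 \<in> E" "fst e2 = RandV k" unfolding Out_def by auto
  then obtain w1 w2 where "e1 = (RandV k, MaxV w1)" "e2 = (RandV k, MaxV w2)"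
    using rand_edge by (metis prod.collapse)
  then show ?thesis using out that by auto
qed

lemma min_edge_absorption:
  assumes e: "(MinV v, h) \<in> E"
  shows "\<exists>a b. \<forall>w. pe E q (MinV v, h) (MaxV w) = (if w = a then 1/2 else 0) + (if w = b then 1/2 else 0)"
proof (cases h)
  case (MaxV w0)
  then show ?thesis by (auto simp: pe_def absorb_prob_nonrand)
next
  case (RandV k)
  then have "k \<in> R" using edge_in_verts[OF e] unfolding verts_def by auto
  then obtain w1 w2 where "w1 \<noteq> w2" and out: "Out E h = {(h, MaxV w1), (h, MaxV w2)}"
    using rand_out_two_max RandV by metis
  moreover have "q (h, MaxV w1) = 1/2" "q (h, MaxV w2) = 1/2"
    using rand_edge out RandV unfolding Out_def by blast+
  ultimately have "pe E q (MinV v, h) (MaxV w) = (if w = w1 then 1/2 else 0) + (if w = w2 then 1/2 else 0)" for w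
    using RandV by (simp add: pe_def absorb_prob_one_step)
  then show ?thesis by blast
qed (use min_edge_head[OF e] in auto)

lemma min_edge_absorption_choice:
  obtains ab where "\<And>v h w. (MinV v, h) \<in> E \<Longrightarrow> pe E q (MinV v, h) (MaxV w) =
    (if w = fst (ab v h) then 1/2 else 0) + (if w = snd (ab v h) then 1/2 else 0)"
proof -
  define ab where "ab v h = (SOME p. \<forall>w. pe E q (MinV v, h) (MaxV w) =
      (if w = fst p then 1/2 else 0) + (if w = snd p then 1/2 else 0))" for v h
  have "pe E q (MinV v, h) (MaxV w) =
      (if w = fst (ab v h) then 1/2 else 0) + (if w = snd (ab v h) then 1/2 else 0)"
    if "(MinV v, h) \<in> E" for v h w
  proof -
    have "\<exists>p. \<forall>w. pe E q (MinV v, h) (MaxV w) =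
        (if w = fst p then 1/2 else 0) + (if w = snd p then 1/2 else 0)"
      using min_edge_absorption[OF that] by (metis fst_conv snd_conv)
    from someI_ex[OF this] show ?thesis unfolding ab_def by blast
  qed
  then show ?thesis by (rule that)
qed

lemma min_edges_list:
  obtains L where "set L = {(v, h). (MinV v, h) \<in> E}" and "L \<noteq> []"
proof -
  have "finite {(v, h). (MinV v, h) \<in> E}"
    by (rule finite_subset[of _ "UNIV \<times> snd ` E"]) (auto simp: finite_E intro: rev_image_eqI)
  then obtain L where L: "set L = {(v, h). (MinV v, h) \<in> E}" using finite_list by blast
  obtain h where "(MinV undefined, h) \<in> E"
    using Out_nonempty[of "MinV undefined"] by (auto simp: verts_def Out_def)
  then have "L \<noteq> []" using L by auto
  with L show ?thesis by (rule that)
qed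

lemma max_part_eq_trop_form:
  "max_part E r q x a = trop_form (\<lambda>a u. (MaxV a, MinV u) \<in> E) (\<lambda>a u. r (MaxV a, MinV u)) x a"
proof -
  have out: "Out E (MaxV a) = (\<lambda>u. (MaxV a, MinV u)) ` {u. (MaxV a, MinV u) \<in> E}"
    using max_edge_head unfolding Out_def by fastforce
  have "(\<Sum>u' \<in> {u'. pe E q (MaxV a, MinV u) (MinV u') > 0}. ereal (pe E q (MaxV a, MinV u) (MinV u')) * x u') = x u"
    for u
  proof -
    have "pe E q (MaxV a, MinV u) (MinV u') = (if u = u' then 1 else 0)" for u'
      by (simp add: pe_def absorb_prob_nonrand)
    then show ?thesis by simp
  qed
  then have "max_part E r q x a = Max {ereal (r (MaxV a, MinV u)) + x u | u. (MaxV a, MinV u) \<in> E}"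
    unfolding max_part_def out image_image by (simp add: setcompr_eq_image)
  also have "\<dots> = trop_form (\<lambda>a u. (MaxV a, MinV u) \<in> E) (\<lambda>a u. r (MaxV a, MinV u)) x a"
    unfolding trop_form_def using Out_nonempty[of "MaxV a"] out
    by (intro cSup_eq_Max[symmetric]) (auto simp: verts_def)
  finally show ?thesis .
qed

lemma le_game_op_iff:
  "x v \<le> game_op E r q x v \<longleftrightarrow>
    (\<forall>h. (MinV v, h) \<in> E \<longrightarrow> x v \<le> ereal (r (MinV v, h)) +
       (\<Sum>w \<in> {w. pe E q (MinV v, h) (MaxV w) > 0}. ereal (pe E q (MinV v, h) (MaxV w)) * max_part E r q x w))"
  using finite_Out Out_nonempty[of "MinV v"] unfolding game_op_def by (auto simp: verts_def Out_def)

lemma sub_fixpoint_iff_edge_constraints: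
  fixes x :: "'n \<Rightarrow> ereal" and r :: "('n, 'm, 'r) edge \<Rightarrow> real"
  assumes fin: "\<forall>u. x u \<noteq> \<infinity>"
    and ab: "\<And>v h w. (MinV v, h) \<in> E \<Longrightarrow> pe E q (MinV v, h) (MaxV w) =
        (if w = fst (ab v h) then 1/2 else 0) + (if w = snd (ab v h) then 1/2 else 0)"
  defines "S \<equiv> trop_form (\<lambda>a u. (MaxV a, MinV u) \<in> E) (\<lambda>a u. r (MaxV a, MinV u)) x"
  shows "(\<forall>v. x v \<le> game_op E r q x v) \<longleftrightarrow>
    (\<forall>v h. (MinV v, h) \<in> E \<longrightarrow> 2 * (ereal (- r (MinV v, h)) + x v) \<le> S (fst (ab v h)) + S (snd (ab v h)))"
proof -
  have "x v \<le> ereal (r (MinV v, h)) +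
       (\<Sum>w \<in> {w. pe E q (MinV v, h) (MaxV w) > 0}. ereal (pe E q (MinV v, h) (MaxV w)) * max_part E r q x w)
    \<longleftrightarrow> 2 * (ereal (- r (MinV v, h)) + x v) \<le> S (fst (ab v h)) + S (snd (ab v h))"
    if "(MinV v, h) \<in> E" for v h
  proof -
    have "(\<Sum>w \<in> {w. pe E q (MinV v, h) (MaxV w) > 0}. ereal (pe E q (MinV v, h) (MaxV w)) * max_part E r q x w)
      = ereal (1/2) * S (fst (ab v h)) + ereal (1/2) * S (snd (ab v h))"
      unfolding sum_half_indicators[OF allI[OF ab[OF that]]] S_def max_part_eq_trop_form ..
    moreover have "S a \<noteq> \<infinity>" for a unfolding S_def by (rule trop_form_not_infty[OF fin])
    ultimately show ?thesis using le_plus_half_sum_iff fin by simp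
  qed
  then show ?thesis by (auto simp: le_game_op_iff)
qed

end

theorem mainTheorem13:
  fixes R :: "'r set"
    and E :: "('n::finite, 'm::finite, 'r) edge set"
    and r q :: "('n, 'm, 'r) edge \<Rightarrow> real"
  assumes "game_graph R E q"
    and "\<forall>k \<in> R. card (Out E (RandV k)) = 2"
    and "\<forall>k \<in> R. \<forall>e \<in> Out E (RandV k). q e = 1/2 \<and> isMax (snd e)"
  shows "\<exists>d > 0. \<exists>Qs :: 'n \<Rightarrow> smatrix.
           (\<forall>k. sym_mat d (Qs k) \<and> trop_metzler d (Qs k)) \<and>
           {x :: 'n \<Rightarrow> ereal. (\<forall>i. x i \<noteq> \<infinity>) \<and> (\<forall>i. x i \<le> game_op E r q x i)}
             = trop_spectrahedron d (\<lambda>_ _. SZero) Qs"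
proof -
  interpret binary_random_game R E q using assms by unfold_locales
  obtain ab where ab: "\<And>v h w. (MinV v, h) \<in> E \<Longrightarrow> pe E q (MinV v, h) (MaxV w) =
      (if w = fst (ab v h) then 1/2 else 0) + (if w = snd (ab v h) then 1/2 else 0)"
    using min_edge_absorption_choice by blast
  obtain L where L: "set L = {(v, h). (MinV v, h) \<in> E}" and "L \<noteq> []"
    by (rule min_edges_list)
  let ?Q = "block_matrix (\<lambda>t. fst (case_prod ab (L!t))) (\<lambda>t. snd (case_prod ab (L!t))) (\<lambda>t. fst (L!t))
    (\<lambda>t. - r (MinV (fst (L!t)), snd (L!t))) (\<lambda>a u. (MaxV a, MinV u) \<in> E) (\<lambda>a u. r (MaxV a, MinV u))"
  let ?S = "trop_form (\<lambda>a u. (MaxV a, MinV u) \<in> E) (\<lambda>a u. r (MaxV a, MinV u))"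
  have "x \<in> trop_spectrahedron (2 * length L) (\<lambda>_ _. SZero) ?Q \<longleftrightarrow>
      (\<forall>i. x i \<noteq> \<infinity>) \<and> (\<forall>i. x i \<le> game_op E r q x i)" for x
  proof -
    have "x \<in> trop_spectrahedron (2 * length L) (\<lambda>_ _. SZero) ?Q \<longleftrightarrow> (\<forall>i. x i \<noteq> \<infinity>) \<and>
        (\<forall>(v, h) \<in> set L. 2 * (ereal (- r (MinV v, h)) + x v) \<le> ?S x (fst (ab v h)) + ?S x (snd (ab v h)))"
      unfolding trop_spectrahedron_block_matrix_iff all_set_conv_all_nth by (simp add: case_prod_beta)
    also have "\<dots> \<longleftrightarrow> (\<forall>i. x i \<noteq> \<infinity>) \<and> (\<forall>i. x i \<le> game_op E r q x i)"
      using sub_fixpoint_iff_edge_constraints[OF _ ab, of x r] L by auto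
    finally show ?thesis .
  qed
  then show ?thesis using \<open>L \<noteq> []\<close>
    by (intro exI[of _ "2 * length L"] conjI exI[of _ ?Q]) (auto simp: block_matrix_sym_metzler)
qed

end
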